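(* Let $(L,\le,\bot,\top)$ be a complete lattice and $(\&_i,\swarrow^i,\nwarrow_i)$, $i=1,\dots,n$, adjoint triples on $L$ with $x\,\&_i\,\top=\top\,\&_i\,x=x$ for all $x\in L$ and all $i$. Let $(A,B,R,\sigma)$ be a normalized context whose concept lattice $\mathcal{M}$ satisfies the ascending chain condition. If the context has a decomposition into independent subcontexts, then $\mathcal{M}$ has a decomposition into independent blocks. Specifically, if $\{(A_\lambda,B_\lambda,R_\lambda,\sigma_\lambda)\mid\lambda\in\Lambda\}$ is a decomposition into independent subcontexts, then the family $\{K_\lambda\}_{\lambda\in\Lambda}$ with $$K_\lambda=\{\langle g,f\rangle\in\mathcal{M}\mid\langle g,f\rangle=\textstyle\bigwedge M_g^{A_\lambda}\}\cup\{\langle g_\top,f_\bot\rangle,\langle g_\bot,f_\top\rangle\}$$ is a decomposition of $\mathcal{M}$ into independent blocks.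
   Context: An adjoint triple on $L$ is a triple of maps $\&,\swarrow,\nwarrow\colon L\times L\to L$ with $x\le z\swarrow y\iff x\& y\le z\iff y\le z\nwarrow x$. A context is $(A,B,R,\sigma)$ with $A,B$ non-empty, $R\colon A\times B\to L$, $\sigma\colon A\times B\to\{1,\dots,n\}$; normalized means every $a\in A$ has $b_1,b_2$ with $R(a,b_1)\ne\bot$, $R(a,b_2)=\bot$, and every $b\in B$ has $a_1,a_2$ with $R(a_1,b)\ne\bot$, $R(a_2,b)=\bot$. For $g\colon B\to L$, $f\colon A\to L$: $g^\uparrow(a)=\inf_{b}R(a,b)\swarrow^{\sigma(a,b)}g(b)$, $f^\downarrow(b)=\inf_{a}R(a,b)\nwarrow_{\sigma(a,b)}f(a)$. $\mathcal{M}$ is the complete lattice of pairs $\langle g,f\rangle$ with $g^\uparrow=f$, $f^\downarrow=g$, ordered by $g_1\le g_2$ pointwise; top $\langle g_\top,f_\bot\rangle$, bottom $\langle g_\bot,f_\top\rangle$ ($g_\top,g_\bot,f_\top,f_\bot$ constant maps). $\phi_{a,x}\colon A\to L$ takes value $x$ at $a$ and $\bot$ elsewhere. Meet-irreducible concepts (elements $c\ne$ top with $c=d\wedge e\Rightarrow c\in\{d,e\}$) all have the form $\langle\phi_{a,x}^\downarrow,\phi_{a,x}^{\downarrow\uparrow}\rangle$. For $A'\subseteq A$, $M_F^{A'}$ is the set of meet-irreducible concepts equal to $\langle\phi_{a,x}^\downarrow,\phi_{a,x}^{\downarrow\uparrow}\rangle$ for some $a\in A'$, $x\in L$, and $M_g^{A'}=\{c\in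 M_F^{A'}\mid\langle g,f\rangle\preceq c\}$. Separable subcontext: $(Y,X,R_{Y\times X},\sigma_{Y\times X})$ with $Y\subsetneq A$, $X\subsetneq B$ non-empty, some $R(a,b)\ne\bot$ with $a\in Y,b\in X$, $R=\bot$ on $Y\times(B\setminus X)$ and on $(A\setminus Y)\times X$. $\&$ has zero-divisors if $x\&y=\bot$ for some $x,y\ne\bot$. Decomposition into independent subcontexts: non-empty $\Lambda$, each $(A_\lambda,B_\lambda,R_\lambda,\sigma_\lambda)$ (restrictions) separable, $\{A_\lambda\}$ partitions $A$, $\{B_\lambda\}$ partitions $B$, and $\&_{\sigma(a,b)}$ has no zero-divisors whenever $(a,b)\in((A\setminus A_\lambda)\times B_\lambda)\cup(A_\lambda\times(B\setminus B_\lambda))$ for some $\lambda$. For a bounded lattice $(M,\preceq,\bot,\top)$, a block is a sublattice $K\subsetneq M$ with $K\setminus\{\bot,\top\}\ne\varnothing$ and $(\{x\mid k\preceq x\}\cup\{x\mid x\preceq k\})\setminus\{\bot,\top\}\subseteq K$ for all $k\in K\setminus\{\bot,\top\}$. Blocks $K_1,K_2$ are independent if $K_1\cap K_2\subseteq\{\bot,\top\}$. $M$ has a decomposition into independent blocks if there is a family of pairwise independent blocks whose union is $M$. *)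

theory Defs
  imports Main
begin

text \<open>A context is given by A, B, R, sigma; the adjoint triples by
  conj i, impL i (written z \<swarrow>^i y in the paper, called as impL i z y)
  and impR i (written z \<nwarrow>_i x in the paper, called as impR i z x).
  Maps g : B \<rightarrow> L and f : A \<rightarrow> L are represented as total functions
  that are \<bottom> outside B resp. A.\<close>

definition adjoint_triple ::
  "('l::complete_lattice \<Rightarrow> 'l \<Rightarrow> 'l) \<Rightarrow> ('l \<Rightarrow> 'l \<Rightarrow> 'l) \<Rightarrow> ('l \<Rightarrow> 'l \<Rightarrow> 'l) \<Rightarrow> bool" where
  "adjoint_triple cj iL iR \<longleftrightarrow>
     (\<forall>x y z. (x \<le> iL z y \<longleftrightarrow> cj x y \<le> z) \<and> (cj x y \<le> z \<longleftrightarrow> y \<le> iR z x))"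

definition normalized_context :: "'a set \<Rightarrow> 'b set \<Rightarrow> ('a \<Rightarrow> 'b \<Rightarrow> 'l::complete_lattice) \<Rightarrow> bool" where
  "normalized_context A B R \<longleftrightarrow>
     (\<forall>a\<in>A. (\<exists>b1\<in>B. R a b1 \<noteq> bot) \<and> (\<exists>b2\<in>B. R a b2 = bot)) \<and>
     (\<forall>b\<in>B. (\<exists>a1\<in>A. R a1 b \<noteq> bot) \<and> (\<exists>a2\<in>A. R a2 b = bot))"

definition up ::
  "(nat \<Rightarrow> 'l \<Rightarrow> 'l \<Rightarrow> 'l) \<Rightarrow> 'a set \<Rightarrow> 'b set \<Rightarrow> ('a \<Rightarrow> 'b \<Rightarrow> 'l::complete_lattice)
     \<Rightarrow> ('a \<Rightarrow> 'b \<Rightarrow> nat) \<Rightarrow> ('b \<Rightarrow> 'l) \<Rightarrow> 'a \<Rightarrow> 'l" where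
  "up iL A B R \<sigma> g = (\<lambda>a. if a \<in> A then (INF b\<in>B. iL (\<sigma> a b) (R a b) (g b)) else bot)"

definition down ::
  "(nat \<Rightarrow> 'l \<Rightarrow> 'l \<Rightarrow> 'l) \<Rightarrow> 'a set \<Rightarrow> 'b set \<Rightarrow> ('a \<Rightarrow> 'b \<Rightarrow> 'l::complete_lattice)
     \<Rightarrow> ('a \<Rightarrow> 'b \<Rightarrow> nat) \<Rightarrow> ('a \<Rightarrow> 'l) \<Rightarrow> 'b \<Rightarrow> 'l" where
  "down iR A B R \<sigma> f = (\<lambda>b. if b \<in> B then (INF a\<in>A. iR (\<sigma> a b) (R a b) (f a)) else bot)"

definition concepts ::
  "(nat \<Rightarrow> 'l \<Rightarrow> 'l \<Rightarrow> 'l) \<Rightarrow> (nat \<Rightarrow> 'l \<Rightarrow> 'l \<Rightarrow> 'l) \<Rightarrow> 'a set \<Rightarrow> 'b set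
     \<Rightarrow> ('a \<Rightarrow> 'b \<Rightarrow> 'l::complete_lattice) \<Rightarrow> ('a \<Rightarrow> 'b \<Rightarrow> nat) \<Rightarrow> (('b \<Rightarrow> 'l) \<times> ('a \<Rightarrow> 'l)) set" where
  "concepts iL iR A B R \<sigma> = {(g, f). up iL A B R \<sigma> g = f \<and> down iR A B R \<sigma> f = g}"

definition cleq :: "('b \<Rightarrow> 'l::complete_lattice) \<times> ('a \<Rightarrow> 'l) \<Rightarrow> ('b \<Rightarrow> 'l) \<times> ('a \<Rightarrow> 'l) \<Rightarrow> bool" where
  "cleq c d \<longleftrightarrow> fst c \<le> fst d"

definition ctop :: "'a set \<Rightarrow> 'b set \<Rightarrow> ('b \<Rightarrow> 'l::complete_lattice) \<times> ('a \<Rightarrow> 'l)" where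
  "ctop A B = ((\<lambda>b. if b \<in> B then top else bot), (\<lambda>a. bot))"

definition cbot :: "'a set \<Rightarrow> 'b set \<Rightarrow> ('b \<Rightarrow> 'l::complete_lattice) \<times> ('a \<Rightarrow> 'l)" where
  "cbot A B = ((\<lambda>b. bot), (\<lambda>a. if a \<in> A then top else bot))"

definition glb_in :: "('c \<Rightarrow> 'c \<Rightarrow> bool) \<Rightarrow> 'c set \<Rightarrow> 'c set \<Rightarrow> 'c \<Rightarrow> bool" where
  "glb_in le M S c \<longleftrightarrow> c \<in> M \<and> (\<forall>d\<in>S. le c d) \<and> (\<forall>e\<in>M. (\<forall>d\<in>S. le e d) \<longrightarrow> le e c)"

definition lub_in :: "('c \<Rightarrow> 'c \<Rightarrow> bool) \<Rightarrow> 'c set \<Rightarrow> 'c set \<Rightarrow> 'c \<Rightarrow> bool" where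
  "lub_in le M S c \<longleftrightarrow> c \<in> M \<and> (\<forall>d\<in>S. le d c) \<and> (\<forall>e\<in>M. (\<forall>d\<in>S. le d e) \<longrightarrow> le c e)"

definition ascending_chain_condition :: "('c \<Rightarrow> 'c \<Rightarrow> bool) \<Rightarrow> 'c set \<Rightarrow> bool" where
  "ascending_chain_condition le M \<longleftrightarrow>
     \<not> (\<exists>c :: nat \<Rightarrow> 'c. \<forall>k. c k \<in> M \<and> le (c k) (c (Suc k)) \<and> c k \<noteq> c (Suc k))"

definition meet_irreducible_in :: "('c \<Rightarrow> 'c \<Rightarrow> bool) \<Rightarrow> 'c set \<Rightarrow> 'c \<Rightarrow> 'c \<Rightarrow> bool" where
  "meet_irreducible_in le M tp c \<longleftrightarrow> c \<in> M \<and> c \<noteq> tp \<and>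
     (\<forall>d\<in>M. \<forall>e\<in>M. glb_in le M {d, e} c \<longrightarrow> c = d \<or> c = e)"

definition sublattice_in :: "('c \<Rightarrow> 'c \<Rightarrow> bool) \<Rightarrow> 'c set \<Rightarrow> 'c set \<Rightarrow> bool" where
  "sublattice_in le M K \<longleftrightarrow> K \<subseteq> M \<and>
     (\<forall>x\<in>K. \<forall>y\<in>K. \<forall>z. glb_in le M {x, y} z \<longrightarrow> z \<in> K) \<and>
     (\<forall>x\<in>K. \<forall>y\<in>K. \<forall>z. lub_in le M {x, y} z \<longrightarrow> z \<in> K)"

definition block_in :: "('c \<Rightarrow> 'c \<Rightarrow> bool) \<Rightarrow> 'c set \<Rightarrow> 'c \<Rightarrow> 'c \<Rightarrow> 'c set \<Rightarrow> bool" where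
  "block_in le M bt tp K \<longleftrightarrow> sublattice_in le M K \<and> K \<subset> M \<and> K - {bt, tp} \<noteq> {} \<and>
     (\<forall>k\<in>K - {bt, tp}. ({x\<in>M. le k x} \<union> {x\<in>M. le x k}) - {bt, tp} \<subseteq> K)"

definition independent_blocks :: "'c \<Rightarrow> 'c \<Rightarrow> 'c set \<Rightarrow> 'c set \<Rightarrow> bool" where
  "independent_blocks bt tp K1 K2 \<longleftrightarrow> K1 \<inter> K2 \<subseteq> {bt, tp}"

definition block_decomposition_family ::
  "('c \<Rightarrow> 'c \<Rightarrow> bool) \<Rightarrow> 'c set \<Rightarrow> 'c \<Rightarrow> 'c \<Rightarrow> 'i set \<Rightarrow> ('i \<Rightarrow> 'c set) \<Rightarrow> bool" where
  "block_decomposition_family le M bt tp I K \<longleftrightarrow>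
     (\<forall>i\<in>I. block_in le M bt tp (K i)) \<and>
     (\<forall>i\<in>I. \<forall>j\<in>I. i \<noteq> j \<longrightarrow> independent_blocks bt tp (K i) (K j)) \<and>
     (\<Union>i\<in>I. K i) = M"

definition has_block_decomposition :: "('c \<Rightarrow> 'c \<Rightarrow> bool) \<Rightarrow> 'c set \<Rightarrow> 'c \<Rightarrow> 'c \<Rightarrow> bool" where
  "has_block_decomposition le M bt tp \<longleftrightarrow>
     (\<exists>\<K>. (\<forall>K\<in>\<K>. block_in le M bt tp K) \<and>
          (\<forall>K1\<in>\<K>. \<forall>K2\<in>\<K>. K1 \<noteq> K2 \<longrightarrow> independent_blocks bt tp K1 K2) \<and>
          \<Union>\<K> = M)"

definition no_zero_divisors :: "('l::complete_lattice \<Rightarrow> 'l \<Rightarrow> 'l) \<Rightarrow> bool" where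
  "no_zero_divisors cj \<longleftrightarrow> (\<forall>x y. x \<noteq> bot \<longrightarrow> y \<noteq> bot \<longrightarrow> cj x y \<noteq> bot)"

definition separable_subcontext ::
  "'a set \<Rightarrow> 'b set \<Rightarrow> ('a \<Rightarrow> 'b \<Rightarrow> 'l::complete_lattice) \<Rightarrow> 'a set \<Rightarrow> 'b set \<Rightarrow> bool" where
  "separable_subcontext A B R Y X \<longleftrightarrow>
     Y \<subset> A \<and> X \<subset> B \<and> Y \<noteq> {} \<and> X \<noteq> {} \<and>
     (\<exists>a\<in>Y. \<exists>b\<in>X. R a b \<noteq> bot) \<and>
     (\<forall>a\<in>Y. \<forall>b\<in>B - X. R a b = bot) \<and>
     (\<forall>a\<in>A - Y. \<forall>b\<in>X. R a b = bot)"

definition independent_subcontext_decomposition ::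
  "(nat \<Rightarrow> 'l \<Rightarrow> 'l \<Rightarrow> 'l) \<Rightarrow> 'a set \<Rightarrow> 'b set \<Rightarrow> ('a \<Rightarrow> 'b \<Rightarrow> 'l::complete_lattice)
     \<Rightarrow> ('a \<Rightarrow> 'b \<Rightarrow> nat) \<Rightarrow> 'i set \<Rightarrow> ('i \<Rightarrow> 'a set) \<Rightarrow> ('i \<Rightarrow> 'b set) \<Rightarrow> bool" where
  "independent_subcontext_decomposition cj A B R \<sigma> \<Lambda> AL BL \<longleftrightarrow>
     \<Lambda> \<noteq> {} \<and>
     (\<forall>l\<in>\<Lambda>. separable_subcontext A B R (AL l) (BL l)) \<and>
     (\<Union>l\<in>\<Lambda>. AL l) = A \<and> (\<forall>l\<in>\<Lambda>. \<forall>m\<in>\<Lambda>. l \<noteq> m \<longrightarrow> AL l \<inter> AL m = {}) \<and>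
     (\<Union>l\<in>\<Lambda>. BL l) = B \<and> (\<forall>l\<in>\<Lambda>. \<forall>m\<in>\<Lambda>. l \<noteq> m \<longrightarrow> BL l \<inter> BL m = {}) \<and>
     (\<forall>l\<in>\<Lambda>. \<forall>(a, b) \<in> ((A - AL l) \<times> BL l) \<union> (AL l \<times> (B - BL l)).
        no_zero_divisors (cj (\<sigma> a b)))"

definition phi :: "'a \<Rightarrow> 'l::complete_lattice \<Rightarrow> 'a \<Rightarrow> 'l" where
  "phi a x = (\<lambda>a'. if a' = a then x else bot)"

definition MF ::
  "(nat \<Rightarrow> 'l \<Rightarrow> 'l \<Rightarrow> 'l) \<Rightarrow> (nat \<Rightarrow> 'l \<Rightarrow> 'l \<Rightarrow> 'l) \<Rightarrow> 'a set \<Rightarrow> 'b set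
     \<Rightarrow> ('a \<Rightarrow> 'b \<Rightarrow> 'l::complete_lattice) \<Rightarrow> ('a \<Rightarrow> 'b \<Rightarrow> nat) \<Rightarrow> 'a set \<Rightarrow> (('b \<Rightarrow> 'l) \<times> ('a \<Rightarrow> 'l)) set" where
  "MF iL iR A B R \<sigma> A' =
     {c. meet_irreducible_in cleq (concepts iL iR A B R \<sigma>) (ctop A B) c \<and>
         (\<exists>a\<in>A'. \<exists>x. c = (down iR A B R \<sigma> (phi a x), up iL A B R \<sigma> (down iR A B R \<sigma> (phi a x))))}"

definition Mg ::
  "(nat \<Rightarrow> 'l \<Rightarrow> 'l \<Rightarrow> 'l) \<Rightarrow> (nat \<Rightarrow> 'l \<Rightarrow> 'l \<Rightarrow> 'l) \<Rightarrow> 'a set \<Rightarrow> 'b set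
     \<Rightarrow> ('a \<Rightarrow> 'b \<Rightarrow> 'l::complete_lattice) \<Rightarrow> ('a \<Rightarrow> 'b \<Rightarrow> nat) \<Rightarrow> 'a set
     \<Rightarrow> ('b \<Rightarrow> 'l) \<times> ('a \<Rightarrow> 'l) \<Rightarrow> (('b \<Rightarrow> 'l) \<times> ('a \<Rightarrow> 'l)) set" where
  "Mg iL iR A B R \<sigma> A' gf = {c \<in> MF iL iR A B R \<sigma> A'. cleq gf c}"

definition Kset ::
  "(nat \<Rightarrow> 'l \<Rightarrow> 'l \<Rightarrow> 'l) \<Rightarrow> (nat \<Rightarrow> 'l \<Rightarrow> 'l \<Rightarrow> 'l) \<Rightarrow> 'a set \<Rightarrow> 'b set
     \<Rightarrow> ('a \<Rightarrow> 'b \<Rightarrow> 'l::complete_lattice) \<Rightarrow> ('a \<Rightarrow> 'b \<Rightarrow> nat) \<Rightarrow> 'a set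
     \<Rightarrow> (('b \<Rightarrow> 'l) \<times> ('a \<Rightarrow> 'l)) set" where
  "Kset iL iR A B R \<sigma> A' =
     {gf \<in> concepts iL iR A B R \<sigma>.
        glb_in cleq (concepts iL iR A B R \<sigma>) (Mg iL iR A B R \<sigma> A' gf) gf}
     \<union> {ctop A B, cbot A B}"

end

theory Submission
  imports Defs
begin

(*
  Under the ascending chain condition every concept is the meet of the meet-irreducible
  attribute concepts <phi_{a,x}^down, phi_{a,x}^{down up}> above it.  If (a, b) crosses the
  decomposition, then R a b = bot while the conjunctor at (a, b) has no zero-divisors, so no
  concept is non-bot both in its intent at a and in its extent at b.  Consequently every concept
  other than top and bottom has non-bot extent on exactly one B_lambda; the resulting classes are
  closed upwards below the top, and every irreducible attribute concept above a member of the
  class of lambda comes from an attribute in A_lambda, which identifies the class with K_lambda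
  without top and bottom.  Finally, a partition of the non-trivial elements of a bounded poset into
  at least two upward closed classes is automatically downward closed, and the classes with top
  and bottom added are independent blocks.
*)

lemma glb_in_iterated:
  assumes "glb_in le M U d"
    and "\<And>u. u \<in> U \<Longrightarrow> glb_in le M (S u) u"
    and "\<And>u. u \<in> U \<Longrightarrow> S u \<subseteq> S'"
    and "\<forall>s\<in>S'. le d s"
  shows "glb_in le M S' d"
  using assms unfolding glb_in_def by (meson subsetD)

lemma glb_in_meet_irreducibles_above:
  assumes trans: "\<And>x y z. x \<in> M \<Longrightarrow> y \<in> M \<Longrightarrow> z \<in> M \<Longrightarrow> le x y \<Longrightarrow> le y z \<Longrightarrow> le x z"
    and refl: "\<And>x. x \<in> M \<Longrightarrow> le x x"
    and top: "\<And>x. x \<in> M \<Longrightarrow> le x tp"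
    and acc: "ascending_chain_condition le M"
    and generated: "\<And>d. d \<in> M \<Longrightarrow> \<exists>U \<subseteq> G \<inter> M. glb_in le M U d"
    and "d \<in> M"
  shows "glb_in le M {m \<in> G. meet_irreducible_in le M tp m \<and> le d m} d"
proof -
  let ?S = "\<lambda>d. {m \<in> G. meet_irreducible_in le M tp m \<and> le d m}"
  define r where "r = {(u, d). u \<in> M \<and> d \<in> M \<and> le d u \<and> d \<noteq> u}"
  have "wf r"
    unfolding wf_iff_no_infinite_down_chain
    using acc unfolding ascending_chain_condition_def r_def by blast
  then show ?thesis
    using \<open>d \<in> M\<close>
  proof (induction d rule: wf_induct_rule)
    case (less d)
    have reduce: "glb_in le M (?S d) d" if U: "glb_in le M U d" "U \<subseteq> M" "d \<notin> U" for U
    proof (rule glb_in_iterated[OF U(1)])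
      fix u assume u: "u \<in> U"
      then have "le d u" "u \<in> M" using U unfolding glb_in_def by auto
      with u U(3) less.prems have "(u, d) \<in> r" unfolding r_def by auto
      with less.IH \<open>u \<in> M\<close> show "glb_in le M (?S u) u" by blast
      show "?S u \<subseteq> ?S d"
        using trans less.prems \<open>le d u\<close> \<open>u \<in> M\<close> unfolding meet_irreducible_in_def by blast
    qed blast
    consider "d = tp" | "d \<in> ?S d" | "d \<noteq> tp" "\<not> meet_irreducible_in le M tp d"
      | "meet_irreducible_in le M tp d" "d \<notin> ?S d"
      by blast
    then show ?case
    proof cases
      case 1
      then show ?thesis using less.prems top unfolding glb_in_def by blast
    next
      case 2
      then show ?thesis using less.prems unfolding glb_in_def by blast
    next
      case 3
      then obtain p q where "p \<in> M" "q \<in> M" "glb_in le M {p, q} d" "d \<noteq> p" "d \<noteq> q"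
        using less.prems unfolding meet_irreducible_in_def by blast
      then show ?thesis by (intro reduce) auto
    next
      case 4
      then have "d \<notin> G" using refl less.prems by blast
      moreover obtain U where "U \<subseteq> G \<inter> M" "glb_in le M U d" using generated less.prems by blast
      ultimately show ?thesis using reduce by blast
    qed
  qed
qed

lemma block_in_of_convex_part:
  assumes antisym: "\<And>x y. x \<in> M \<Longrightarrow> y \<in> M \<Longrightarrow> le x y \<Longrightarrow> le y x \<Longrightarrow> x = y"
    and bt: "bt \<in> M" "\<And>x. x \<in> M \<Longrightarrow> le bt x"
    and tp: "tp \<in> M" "\<And>x. x \<in> M \<Longrightarrow> le x tp"
    and Q: "Q \<subseteq> M - {bt, tp}" "Q \<noteq> {}" "\<not> M - {bt, tp} \<subseteq> Q"
    and up_closed: "\<And>q x. q \<in> Q \<Longrightarrow> x \<in> M \<Longrightarrow> le q x \<Longrightarrow> x \<noteq> tp \<Longrightarrow> x \<in> Q"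
    and down_closed: "\<And>q x. q \<in> Q \<Longrightarrow> x \<in> M \<Longrightarrow> le x q \<Longrightarrow> x \<noteq> bt \<Longrightarrow> x \<in> Q"
  shows "block_in le M bt tp (Q \<union> {bt, tp})"
proof -
  let ?K = "Q \<union> {bt, tp}"
  have glb_closed: "z \<in> ?K" if x: "x \<in> ?K" and y: "y \<in> ?K" and z: "glb_in le M {x, y} z" for x y z
  proof -
    have "z \<in> M" "le z x" "le z y" and greatest: "\<And>e. e \<in> M \<Longrightarrow> le e x \<Longrightarrow> le e y \<Longrightarrow> le e z"
      using z unfolding glb_in_def by auto
    consider "x \<in> Q \<or> y \<in> Q" | "x = bt \<or> y = bt" | "x = tp" "y = tp" using x y by blast
    then show ?thesis
    proof cases
      case 1
      then show ?thesis using down_closed \<open>z \<in> M\<close> \<open>le z x\<close> \<open>le z y\<close> by blast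
    next
      case 2
      then have "z = bt" using antisym bt \<open>z \<in> M\<close> \<open>le z x\<close> \<open>le z y\<close> by blast
      then show ?thesis by blast
    next
      case 3
      then have "z = tp" using antisym tp greatest[of tp] \<open>z \<in> M\<close> by blast
      then show ?thesis by blast
    qed
  qed
  have lub_closed: "z \<in> ?K" if x: "x \<in> ?K" and y: "y \<in> ?K" and z: "lub_in le M {x, y} z" for x y z
  proof -
    have "z \<in> M" "le x z" "le y z" and least: "\<And>e. e \<in> M \<Longrightarrow> le x e \<Longrightarrow> le y e \<Longrightarrow> le z e"
      using z unfolding lub_in_def by auto
    consider "x \<in> Q \<or> y \<in> Q" | "x = tp \<or> y = tp" | "x = bt" "y = bt" using x y by blast
    then show ?thesis
    proof cases
      case 1
      then show ?thesis using up_closed \<open>z \<in> M\<close> \<open>le x z\<close> \<open>le y z\<close> by blast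
    next
      case 2
      then have "z = tp" using antisym tp \<open>z \<in> M\<close> \<open>le x z\<close> \<open>le y z\<close> by blast
      then show ?thesis by blast
    next
      case 3
      then have "z = bt" using antisym bt least[of bt] \<open>z \<in> M\<close> by blast
      then show ?thesis by blast
    qed
  qed
  have "sublattice_in le M ?K"
    unfolding sublattice_in_def using Q(1) bt(1) tp(1) glb_closed lub_closed by blast
  moreover have "?K \<subset> M" using Q bt(1) tp(1) by blast
  moreover have "?K - {bt, tp} \<noteq> {}" using Q by blast
  moreover have "({x\<in>M. le k x} \<union> {x\<in>M. le x k}) - {bt, tp} \<subseteq> ?K" if "k \<in> ?K - {bt, tp}" for k
    using that up_closed down_closed by blast
  ultimately show ?thesis unfolding block_in_def by blast
qed

lemma block_decomposition_family_of_partition: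
  assumes antisym: "\<And>x y. x \<in> M \<Longrightarrow> y \<in> M \<Longrightarrow> le x y \<Longrightarrow> le y x \<Longrightarrow> x = y"
    and bt: "bt \<in> M" "\<And>x. x \<in> M \<Longrightarrow> le bt x"
    and tp: "tp \<in> M" "\<And>x. x \<in> M \<Longrightarrow> le x tp"
    and cover: "(\<Union>i\<in>I. Q i) = M - {bt, tp}"
    and disjoint: "\<And>i j. i \<in> I \<Longrightarrow> j \<in> I \<Longrightarrow> i \<noteq> j \<Longrightarrow> Q i \<inter> Q j = {}"
    and nonempty: "\<And>i. i \<in> I \<Longrightarrow> Q i \<noteq> {}"
    and up_closed: "\<And>i q x. i \<in> I \<Longrightarrow> q \<in> Q i \<Longrightarrow> x \<in> M \<Longrightarrow> le q x \<Longrightarrow> x \<noteq> tp \<Longrightarrow> x \<in> Q i"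
    and several: "\<And>i. i \<in> I \<Longrightarrow> \<exists>j\<in>I. j \<noteq> i"
    and "I \<noteq> {}"
  shows "block_decomposition_family le M bt tp I (\<lambda>i. Q i \<union> {bt, tp})"
proof -
  have down_closed: "x \<in> Q i" if i: "i \<in> I" and "q \<in> Q i" "x \<in> M" "le x q" "x \<noteq> bt" for i q x
  proof -
    have "q \<in> M - {bt, tp}" using cover i \<open>q \<in> Q i\<close> by blast
    then have "x \<noteq> tp" using antisym tp \<open>le x q\<close> by blast
    then obtain j where j: "j \<in> I" "x \<in> Q j" using cover \<open>x \<in> M\<close> \<open>x \<noteq> bt\<close> by blast
    then have "q \<in> Q j" using up_closed \<open>le x q\<close> \<open>q \<in> M - {bt, tp}\<close> by blast
    with disjoint i j \<open>q \<in> Q i\<close> have "j = i" by blast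
    with j show ?thesis by simp
  qed
  have "block_in le M bt tp (Q i \<union> {bt, tp})" if i: "i \<in> I" for i
  proof (rule block_in_of_convex_part[where le = le and M = M])
    show "Q i \<subseteq> M - {bt, tp}" using cover i by blast
    show "Q i \<noteq> {}" using nonempty i .
    obtain j where "j \<in> I" "j \<noteq> i" using several i by blast
    moreover obtain y where "y \<in> Q j" using nonempty \<open>j \<in> I\<close> by blast
    ultimately have "y \<in> M - {bt, tp}" "y \<notin> Q i" using cover disjoint i by blast+
    then show "\<not> M - {bt, tp} \<subseteq> Q i" by blast
  next
    show "x \<in> Q i" if "q \<in> Q i" "x \<in> M" "le q x" "x \<noteq> tp" for q x
      using up_closed[OF i that] .
    show "x \<in> Q i" if "q \<in> Q i" "x \<in> M" "le x q" "x \<noteq> bt" for q x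
      using down_closed[OF i that] .
  qed (fact antisym bt tp)+
  moreover have "independent_blocks bt tp (Q i \<union> {bt, tp}) (Q j \<union> {bt, tp})"
    if "i \<in> I" "j \<in> I" "i \<noteq> j" for i j
    using disjoint[OF that] unfolding independent_blocks_def by blast
  moreover have "(\<Union>i\<in>I. Q i \<union> {bt, tp}) = M"
    using cover bt(1) tp(1) \<open>I \<noteq> {}\<close> by blast
  ultimately show ?thesis unfolding block_decomposition_family_def by blast
qed

lemma has_block_decomposition_if_family:
  assumes "block_decomposition_family le M bt tp I K"
  shows "has_block_decomposition le M bt tp"
  unfolding has_block_decomposition_def
proof (intro exI conjI)
  show "\<forall>K'\<in>K ` I. block_in le M bt tp K'"
    and "\<Union> (K ` I) = M"
    using assms unfolding block_decomposition_family_def by auto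
  show "\<forall>K1\<in>K ` I. \<forall>K2\<in>K ` I. K1 \<noteq> K2 \<longrightarrow> independent_blocks bt tp K1 K2"
    using assms unfolding block_decomposition_family_def by fastforce
qed

lemma block_decomposition_family_cong:
  assumes "block_decomposition_family le M bt tp I K" and "\<And>i. i \<in> I \<Longrightarrow> K i = K' i"
  shows "block_decomposition_family le M bt tp I K'"
  using assms unfolding block_decomposition_family_def by simp

locale multi_adjoint_context =
  fixes n :: nat
    and cj iL iR :: "nat \<Rightarrow> 'l::complete_lattice \<Rightarrow> 'l \<Rightarrow> 'l"
    and A :: "'a set" and B :: "'b set"
    and R :: "'a \<Rightarrow> 'b \<Rightarrow> 'l" and \<sigma> :: "'a \<Rightarrow> 'b \<Rightarrow> nat"
  assumes adjoint: "\<forall>i\<in>{1..n}. adjoint_triple (cj i) (iL i) (iR i)"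
    and sigma_range: "\<forall>a\<in>A. \<forall>b\<in>B. \<sigma> a b \<in> {1..n}"
begin

abbreviation "\<M> \<equiv> concepts iL iR A B R \<sigma>"
abbreviation "up_map \<equiv> up iL A B R \<sigma>"
abbreviation "down_map \<equiv> down iR A B R \<sigma>"
abbreviation "attr_concept a x \<equiv> (down_map (phi a x), up_map (down_map (phi a x)))"

lemma le_iL_iff: "a \<in> A \<Longrightarrow> b \<in> B \<Longrightarrow> x \<le> iL (\<sigma> a b) z y \<longleftrightarrow> cj (\<sigma> a b) x y \<le> z"
  using adjoint sigma_range unfolding adjoint_triple_def by blast

lemma le_iR_iff: "a \<in> A \<Longrightarrow> b \<in> B \<Longrightarrow> y \<le> iR (\<sigma> a b) z x \<longleftrightarrow> cj (\<sigma> a b) x y \<le> z"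
  using adjoint sigma_range unfolding adjoint_triple_def by blast

lemma cj_bot_left: "a \<in> A \<Longrightarrow> b \<in> B \<Longrightarrow> cj (\<sigma> a b) bot y = bot"
  using le_iL_iff[of a b bot bot y] by (simp add: bot_unique)

lemma cj_bot_right: "a \<in> A \<Longrightarrow> b \<in> B \<Longrightarrow> cj (\<sigma> a b) x bot = bot"
  using le_iR_iff[of a b bot bot x] by (simp add: bot_unique)

lemma iR_bot: "a \<in> A \<Longrightarrow> b \<in> B \<Longrightarrow> iR (\<sigma> a b) z bot = top"
  using le_iR_iff[of a b top z bot] by (simp add: cj_bot_left top_unique)

lemma iL_bot: "a \<in> A \<Longrightarrow> b \<in> B \<Longrightarrow> iL (\<sigma> a b) z bot = top"
  using le_iL_iff[of a b top z bot] by (simp add: cj_bot_right top_unique)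

lemma le_down_iff_le_up:
  "(\<forall>b\<in>B. g b \<le> down_map f b) \<longleftrightarrow> (\<forall>a\<in>A. f a \<le> up_map g a)"
  unfolding up_def down_def by (auto simp: le_INF_iff le_iL_iff le_iR_iff)

lemma down_outside [simp]: "b \<notin> B \<Longrightarrow> down_map f b = bot"
  by (simp add: down_def)

lemma up_outside [simp]: "a \<notin> A \<Longrightarrow> up_map g a = bot"
  by (simp add: up_def)

lemma le_up_down: "a \<in> A \<Longrightarrow> f a \<le> up_map (down_map f) a"
  using le_down_iff_le_up[of "down_map f" f] by blast

lemma down_antimono: "(\<And>a. a \<in> A \<Longrightarrow> f a \<le> f' a) \<Longrightarrow> down_map f' \<le> down_map f"
  using le_down_iff_le_up[of "down_map f'" f] le_up_down[of _ f'] order_trans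
  by (fastforce simp: le_fun_def)

lemma down_up_down: "down_map (up_map (down_map f)) = down_map f"
proof (rule order.antisym)
  show "down_map (up_map (down_map f)) \<le> down_map f"
    by (rule down_antimono) (rule le_up_down)
  show "down_map f \<le> down_map (up_map (down_map f))"
    using le_down_iff_le_up[of "down_map f" "up_map (down_map f)"] by (auto simp: le_fun_def)
qed

lemma attr_concept_in_concepts: "attr_concept a x \<in> \<M>"
  unfolding concepts_def by (simp add: down_up_down)

lemma conceptD: "c \<in> \<M> \<Longrightarrow> up_map (fst c) = snd c \<and> down_map (snd c) = fst c"
  unfolding concepts_def by auto

lemma extent_outside [simp]: "c \<in> \<M> \<Longrightarrow> b \<notin> B \<Longrightarrow> fst c b = bot"
  using conceptD[of c] down_outside[of b "snd c"] by simp

lemma intent_outside [simp]: "c \<in> \<M> \<Longrightarrow> a \<notin> A \<Longrightarrow> snd c a = bot"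
  using conceptD[of c] up_outside[of a "fst c"] by simp

lemma concept_eqI: "c \<in> \<M> \<Longrightarrow> d \<in> \<M> \<Longrightarrow> fst c = fst d \<Longrightarrow> c = d"
  using conceptD by (metis prod_eq_iff)

lemma cleq_antisym: "c \<in> \<M> \<Longrightarrow> d \<in> \<M> \<Longrightarrow> cleq c d \<Longrightarrow> cleq d c \<Longrightarrow> c = d"
  unfolding cleq_def by (metis concept_eqI order.antisym)

lemma down_phi: "a \<in> A \<Longrightarrow> b \<in> B \<Longrightarrow> down_map (phi a x) b = iR (\<sigma> a b) (R a b) x"
proof -
  assume a: "a \<in> A" and b: "b \<in> B"
  have "(INF a'\<in>A. iR (\<sigma> a' b) (R a' b) (phi a x a')) = iR (\<sigma> a b) (R a b) x"
  proof (rule order.antisym)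
    show "(INF a'\<in>A. iR (\<sigma> a' b) (R a' b) (phi a x a')) \<le> iR (\<sigma> a b) (R a b) x"
      using a by (metis (mono_tags) INF_lower phi_def)
    show "iR (\<sigma> a b) (R a b) x \<le> (INF a'\<in>A. iR (\<sigma> a' b) (R a' b) (phi a x a'))"
      by (rule INF_greatest) (simp add: phi_def iR_bot b)
  qed
  then show ?thesis using b by (simp add: down_def)
qed

lemma extent_eq_INF_attr_concepts:
  assumes "c \<in> \<M>" and "b \<in> B"
  shows "fst c b = (INF a\<in>A. fst (attr_concept a (snd c a)) b)"
proof -
  have "fst c b = down_map (snd c) b" using conceptD[OF assms(1)] by simp
  also have "\<dots> = (INF a\<in>A. iR (\<sigma> a b) (R a b) (snd c a))" using assms(2) by (simp add: down_def)
  also have "\<dots> = (INF a\<in>A. fst (attr_concept a (snd c a)) b)"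
    by (intro INF_cong) (simp_all add: down_phi assms(2))
  finally show ?thesis .
qed

lemma glb_attr_concepts: "c \<in> \<M> \<Longrightarrow> glb_in cleq \<M> ((\<lambda>a. attr_concept a (snd c a)) ` A) c"
  unfolding glb_in_def
proof (intro conjI ballI impI)
  fix e assume c: "c \<in> \<M>" and e: "e \<in> \<M>"
    and lower: "\<forall>d\<in>(\<lambda>a. attr_concept a (snd c a)) ` A. cleq e d"
  have "fst e b \<le> fst c b" if "b \<in> B" for b
    using lower that c unfolding cleq_def le_fun_def
    by (auto simp: extent_eq_INF_attr_concepts intro!: INF_greatest)
  moreover have "fst e b \<le> fst c b" if "b \<notin> B" for b
    using e that by simp
  ultimately show "cleq e c" unfolding cleq_def le_fun_def by blast
next
  fix d assume c: "c \<in> \<M>" and "d \<in> (\<lambda>a. attr_concept a (snd c a)) ` A"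
  then obtain a where a: "a \<in> A" "d = attr_concept a (snd c a)" by blast
  have "fst c b \<le> fst d b" if "b \<in> B" for b
    using a that extent_eq_INF_attr_concepts[OF c that] by (auto intro: INF_lower)
  moreover have "fst c b \<le> fst d b" if "b \<notin> B" for b
    using c that by simp
  ultimately show "cleq c d" unfolding cleq_def le_fun_def by blast
qed

lemma ctop_greatest: "c \<in> \<M> \<Longrightarrow> cleq c (ctop A B)"
  unfolding cleq_def ctop_def le_fun_def by simp

lemma glb_meet_irreducible_attr_concepts_above:
  assumes acc: "ascending_chain_condition cleq \<M>" and "c \<in> \<M>"
  shows "glb_in cleq \<M>
    {m. meet_irreducible_in cleq \<M> (ctop A B) m \<and> (\<exists>a\<in>A. \<exists>x. m = attr_concept a x) \<and> cleq c m} c"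
proof -
  let ?G = "{m. \<exists>a\<in>A. \<exists>x. m = attr_concept a x}"
  have "glb_in cleq \<M> {m \<in> ?G. meet_irreducible_in cleq \<M> (ctop A B) m \<and> cleq c m} c"
  proof (rule glb_in_meet_irreducibles_above[OF _ _ _ acc _ \<open>c \<in> \<M>\<close>])
    show "\<exists>U \<subseteq> ?G \<inter> \<M>. glb_in cleq \<M> U d" if "d \<in> \<M>" for d
      using glb_attr_concepts[OF that] attr_concept_in_concepts
      by (intro exI[of _ "(\<lambda>a. attr_concept a (snd d a)) ` A"]) blast
  next
    show "cleq x z" if "x \<in> \<M>" "y \<in> \<M>" "z \<in> \<M>" "cleq x y" "cleq y z" for x y z
      using that(4,5) unfolding cleq_def by (rule order_trans)
    show "cleq x x" if "x \<in> \<M>" for x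
      unfolding cleq_def by simp
    show "cleq x (ctop A B)" if "x \<in> \<M>" for x
      using that by (rule ctop_greatest)
  qed
  then show ?thesis by (simp add: conj_commute conj_left_commute)
qed

lemma intent_or_extent_bot:
  assumes c: "c \<in> \<M>" and ab: "a \<in> A" "b \<in> B"
    and "R a b = bot" and "no_zero_divisors (cj (\<sigma> a b))"
  shows "snd c a = bot \<or> fst c b = bot"
proof -
  have "snd c a = up_map (fst c) a" using conceptD[OF c] by simp
  also have "\<dots> \<le> iL (\<sigma> a b) (R a b) (fst c b)" using ab unfolding up_def by (auto intro: INF_lower)
  finally have "snd c a \<le> iL (\<sigma> a b) (R a b) (fst c b)" .
  then have "cj (\<sigma> a b) (snd c a) (fst c b) = bot"
    using le_iL_iff[OF ab] \<open>R a b = bot\<close> bot_unique by metis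
  then show ?thesis using assms(5) unfolding no_zero_divisors_def by blast
qed

lemma eq_bot_if_le_attr_concept:
  assumes "cleq c (attr_concept a x)" and "fst c b \<noteq> bot"
    and ab: "a \<in> A" "b \<in> B" and "R a b = bot" and "no_zero_divisors (cj (\<sigma> a b))"
  shows "x = bot"
proof (rule ccontr)
  assume "x \<noteq> bot"
  moreover have "x \<le> snd (attr_concept a x) a"
    using le_up_down[OF ab(1), of "phi a x"] by (simp add: phi_def)
  ultimately have "snd (attr_concept a x) a \<noteq> bot" using bot_unique by metis
  then have "fst (attr_concept a x) b = bot"
    using intent_or_extent_bot[OF attr_concept_in_concepts ab assms(5,6)] by blast
  with assms(1,2) show False unfolding cleq_def le_fun_def by (metis bot_unique)
qed

end

locale normalized_multi_adjoint_context = multi_adjoint_context +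
  assumes unit: "\<forall>i\<in>{1..n}. \<forall>x. cj i x top = x \<and> cj i top x = x"
    and normalized: "normalized_context A B R"
begin

lemma cj_top: "a \<in> A \<Longrightarrow> b \<in> B \<Longrightarrow> cj (\<sigma> a b) x top = x \<and> cj (\<sigma> a b) top x = x"
  using unit sigma_range by blast

lemma iR_top: "a \<in> A \<Longrightarrow> b \<in> B \<Longrightarrow> iR (\<sigma> a b) z top = z"
  using le_iR_iff[of a b _ z top] cj_top[of a b] by (metis order.antisym order.refl)

lemma iL_top: "a \<in> A \<Longrightarrow> b \<in> B \<Longrightarrow> iL (\<sigma> a b) z top = z"
  using le_iL_iff[of a b _ z top] cj_top[of a b] by (metis order.antisym order.refl)

lemma ctop_in_concepts: "ctop A B \<in> \<M>"
proof -
  have "up_map (\<lambda>b. if b \<in> B then top else bot) a = bot" for a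
  proof (cases "a \<in> A")
    case True
    then obtain b where b: "b \<in> B" "R a b = bot"
      using normalized unfolding normalized_context_def by blast
    then have "up_map (\<lambda>b. if b \<in> B then top else bot) a \<le> iL (\<sigma> a b) (R a b) top"
      using True unfolding up_def by (auto intro: INF_lower2[OF b(1)])
    then show ?thesis using True b by (simp add: iL_top bot_unique)
  qed simp
  moreover have "down_map (\<lambda>a. bot) = (\<lambda>b. if b \<in> B then top else bot)"
    by (auto simp: down_def iR_bot)
  ultimately show ?thesis unfolding concepts_def ctop_def by auto
qed

lemma cbot_in_concepts: "cbot A B \<in> \<M>"
proof -
  have "down_map (\<lambda>a. if a \<in> A then top else bot) b = bot" for b
  proof (cases "b \<in> B")
    case True
    then obtain a where a: "a \<in> A" "R a b = bot"
      using normalized unfolding normalized_context_def by blast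
    then have "down_map (\<lambda>a. if a \<in> A then top else bot) b \<le> iR (\<sigma> a b) (R a b) top"
      using True unfolding down_def by (auto intro: INF_lower2[OF a(1)])
    then show ?thesis using True a by (simp add: iR_top bot_unique)
  qed simp
  moreover have "up_map (\<lambda>b. bot) = (\<lambda>a. if a \<in> A then top else bot)"
    by (auto simp: up_def iL_bot)
  ultimately show ?thesis unfolding concepts_def cbot_def by auto
qed

lemma cbot_least: "cleq (cbot A B) c"
  unfolding cleq_def cbot_def by (simp add: le_fun_def)

lemma ctop_unique: "c \<in> \<M> \<Longrightarrow> cleq (ctop A B) c \<longleftrightarrow> c = ctop A B"
  by (metis cleq_antisym ctop_in_concepts ctop_greatest)

lemma attr_concept_bot: "a \<in> A \<Longrightarrow> attr_concept a bot = ctop A B"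
  by (intro concept_eqI attr_concept_in_concepts ctop_in_concepts ext)
    (simp add: ctop_def down_phi iR_bot)

lemma meet_irreducible_attr_concept_nonbot:
  "a \<in> A \<Longrightarrow> meet_irreducible_in cleq \<M> (ctop A B) (attr_concept a x) \<Longrightarrow> x \<noteq> bot"
  using attr_concept_bot unfolding meet_irreducible_in_def by auto

lemma extent_nonbot_if_ne_cbot:
  assumes "c \<in> \<M>" and "c \<noteq> cbot A B"
  shows "\<exists>b\<in>B. fst c b \<noteq> bot"
proof (rule ccontr)
  assume "\<not> ?thesis"
  then have "fst c = fst (cbot A B)" using assms(1) by (auto simp: cbot_def fun_eq_iff)
  then show False using concept_eqI[OF assms(1) cbot_in_concepts] assms(2) by blast
qed

lemma intent_nonbot_if_ne_ctop:
  assumes "c \<in> \<M>" and "c \<noteq> ctop A B"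
  shows "\<exists>a\<in>A. snd c a \<noteq> bot"
proof (rule ccontr)
  assume "\<not> ?thesis"
  then have "snd c = snd (ctop A B)" using assms(1) by (auto simp: ctop_def fun_eq_iff)
  then have "fst c = fst (ctop A B)" using conceptD assms(1) ctop_in_concepts by metis
  then show False using concept_eqI[OF assms(1) ctop_in_concepts] assms(2) by blast
qed

lemma extent_bot_if_le_meet_irreducible:
  assumes "meet_irreducible_in cleq \<M> (ctop A B) (attr_concept a x)" and "cleq c (attr_concept a x)"
    and "a \<in> A" "b \<in> B" and "R a b = bot" and "no_zero_divisors (cj (\<sigma> a b))"
  shows "fst c b = bot"
  using eq_bot_if_le_attr_concept[OF assms(2) _ assms(3-6)]
    meet_irreducible_attr_concept_nonbot[OF assms(3,1)] by blast

end

locale decomposed_multi_adjoint_context = normalized_multi_adjoint_context +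
  fixes \<Lambda> and AL and BL
  assumes decomp: "independent_subcontext_decomposition cj A B R \<sigma> \<Lambda> AL BL"
begin

lemma index_set_nonempty: "\<Lambda> \<noteq> {}"
  using decomp unfolding independent_subcontext_decomposition_def by blast

lemma separable: "l \<in> \<Lambda> \<Longrightarrow> separable_subcontext A B R (AL l) (BL l)"
  using decomp unfolding independent_subcontext_decomposition_def by blast

lemma AL_cover: "(\<Union>l\<in>\<Lambda>. AL l) = A"
  using decomp unfolding independent_subcontext_decomposition_def by blast

lemma BL_cover: "(\<Union>l\<in>\<Lambda>. BL l) = B"
  using decomp unfolding independent_subcontext_decomposition_def by blast

lemma BL_disjoint: "l \<in> \<Lambda> \<Longrightarrow> m \<in> \<Lambda> \<Longrightarrow> l \<noteq> m \<Longrightarrow> BL l \<inter> BL m = {}"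
  using decomp unfolding independent_subcontext_decomposition_def by blast

lemma crossing_pair:
  assumes "l \<in> \<Lambda>" and "(a, b) \<in> ((A - AL l) \<times> BL l) \<union> (AL l \<times> (B - BL l))"
  shows "R a b = bot" and "no_zero_divisors (cj (\<sigma> a b))"
  using assms separable[OF assms(1)] decomp
  unfolding separable_subcontext_def independent_subcontext_decomposition_def by blast+

definition inner_block where
  "inner_block l = {c \<in> \<M> - {cbot A B, ctop A B}. \<exists>b\<in>BL l. fst c b \<noteq> bot}"

lemma inner_blocks_cover: "(\<Union>l\<in>\<Lambda>. inner_block l) = \<M> - {cbot A B, ctop A B}"
  using extent_nonbot_if_ne_cbot BL_cover unfolding inner_block_def by blast

lemma inner_blocks_disjoint:
  assumes l: "l \<in> \<Lambda>" and m: "m \<in> \<Lambda>" and "l \<noteq> m"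
  shows "inner_block l \<inter> inner_block m = {}"
proof -
  have "k = v" if c: "c \<in> \<M>" "c \<noteq> ctop A B" and a: "a \<in> AL v" "snd c a \<noteq> bot"
    and k: "k \<in> \<Lambda>" "b \<in> BL k" "fst c b \<noteq> bot" and v: "v \<in> \<Lambda>" for c a b k v
  proof (rule ccontr)
    assume "k \<noteq> v"
    then have "b \<in> B - BL v" using BL_disjoint[OF k(1) v] BL_cover k by blast
    moreover have "a \<in> A" using a(1) v AL_cover by blast
    ultimately show False
      using intent_or_extent_bot[OF c(1)] crossing_pair[OF v] a k by blast
  qed
  moreover have "\<exists>v\<in>\<Lambda>. \<exists>a\<in>AL v. snd c a \<noteq> bot" if "c \<in> \<M>" "c \<noteq> ctop A B" for c
    using intent_nonbot_if_ne_ctop[OF that] AL_cover by blast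
  ultimately show ?thesis using l m \<open>l \<noteq> m\<close> unfolding inner_block_def by blast
qed

lemma inner_block_up_closed:
  assumes "c \<in> inner_block l" and "d \<in> \<M>" and "cleq c d" and "d \<noteq> ctop A B"
  shows "d \<in> inner_block l"
proof -
  obtain b where b: "b \<in> BL l" "fst c b \<noteq> bot" using assms(1) unfolding inner_block_def by blast
  then have "fst d b \<noteq> bot" using assms(3) unfolding cleq_def le_fun_def by (metis bot_unique)
  then have "d \<noteq> cbot A B" by (auto simp: cbot_def)
  then show ?thesis using assms(2,4) b \<open>fst d b \<noteq> bot\<close> unfolding inner_block_def by blast
qed

lemma inner_block_nonempty:
  assumes l: "l \<in> \<Lambda>"
  shows "inner_block l \<noteq> {}"
proof -
  obtain a b where ab: "a \<in> AL l" "b \<in> BL l" "R a b \<noteq> bot"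
    using separable[OF l] unfolding separable_subcontext_def by blast
  obtain b' where b': "b' \<in> B - BL l"
    using separable[OF l] unfolding separable_subcontext_def by blast
  have "a \<in> A" "b \<in> B" using ab AL_cover BL_cover l by blast+
  have "fst (attr_concept a top) b = R a b"
    using \<open>a \<in> A\<close> \<open>b \<in> B\<close> by (simp add: down_phi iR_top)
  moreover have "fst (attr_concept a top) b' = bot"
    using \<open>a \<in> A\<close> b' crossing_pair(1)[OF l, of a b'] ab(1) by (simp add: down_phi iR_top)
  moreover have "attr_concept a top \<noteq> ctop A B"
  proof
    assume "attr_concept a top = ctop A B"
    then have "R a b \<le> fst (attr_concept a top) b'" using b' by (simp add: ctop_def)
    with \<open>fst (attr_concept a top) b' = bot\<close> ab(3) show False using bot_unique by metis
  qed
  ultimately have "attr_concept a top \<in> inner_block l"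
    using ab b' attr_concept_in_concepts unfolding inner_block_def by (auto simp: cbot_def ctop_def)
  then show ?thesis by blast
qed

lemma exists_other_index:
  assumes "l \<in> \<Lambda>"
  shows "\<exists>m\<in>\<Lambda>. m \<noteq> l"
proof -
  obtain a where "a \<in> A - AL l"
    using separable[OF assms] unfolding separable_subcontext_def by blast
  moreover obtain m where "m \<in> \<Lambda>" "a \<in> AL m" using AL_cover calculation by blast
  ultimately show ?thesis by auto
qed

lemma mem_inner_block_if_glb_Mg:
  assumes l: "l \<in> \<Lambda>" and c: "c \<in> \<M> - {cbot A B, ctop A B}"
    and glb: "glb_in cleq \<M> (Mg iL iR A B R \<sigma> (AL l) c) c"
  shows "c \<in> inner_block l"
proof -
  obtain m where "m \<in> Mg iL iR A B R \<sigma> (AL l) c"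
    using glb c ctop_in_concepts ctop_unique unfolding glb_in_def by blast
  then obtain a x where a: "a \<in> AL l" and m: "meet_irreducible_in cleq \<M> (ctop A B) (attr_concept a x)"
    and "cleq c (attr_concept a x)"
    unfolding Mg_def MF_def by blast
  obtain b where b: "b \<in> B" "fst c b \<noteq> bot" using extent_nonbot_if_ne_cbot c by blast
  have "a \<in> A" using a l AL_cover by blast
  have "b \<in> BL l"
  proof (rule ccontr)
    assume "b \<notin> BL l"
    with a b crossing_pair[OF l, of a b] extent_bot_if_le_meet_irreducible[OF m \<open>cleq c _\<close> \<open>a \<in> A\<close>]
    show False by blast
  qed
  then show ?thesis using b c unfolding inner_block_def by blast
qed

lemma glb_Mg_if_mem_inner_block:
  assumes acc: "ascending_chain_condition cleq \<M>" and l: "l \<in> \<Lambda>" and c: "c \<in> inner_block l"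
  shows "glb_in cleq \<M> (Mg iL iR A B R \<sigma> (AL l) c) c"
proof -
  obtain b where b: "b \<in> BL l" "fst c b \<noteq> bot" using c unfolding inner_block_def by blast
  have "a \<in> AL l"
    if "meet_irreducible_in cleq \<M> (ctop A B) (attr_concept a x)" "cleq c (attr_concept a x)" "a \<in> A"
    for a x
  proof (rule ccontr)
    assume "a \<notin> AL l"
    with b \<open>a \<in> A\<close> crossing_pair[OF l, of a b] extent_bot_if_le_meet_irreducible[OF that]
    show False using BL_cover l by blast
  qed
  then have "Mg iL iR A B R \<sigma> (AL l) c =
    {m. meet_irreducible_in cleq \<M> (ctop A B) m \<and> (\<exists>a\<in>A. \<exists>x. m = attr_concept a x) \<and> cleq c m}"
    using AL_cover l unfolding Mg_def MF_def by blast
  then show ?thesis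
    using glb_meet_irreducible_attr_concepts_above[OF acc] c unfolding inner_block_def by simp
qed

lemma Kset_eq_inner_block:
  assumes acc: "ascending_chain_condition cleq \<M>" and l: "l \<in> \<Lambda>"
  shows "Kset iL iR A B R \<sigma> (AL l) = inner_block l \<union> {cbot A B, ctop A B}"
  using mem_inner_block_if_glb_Mg[OF l] glb_Mg_if_mem_inner_block[OF acc l]
    cbot_in_concepts ctop_in_concepts
  unfolding Kset_def inner_block_def by blast

lemma Kset_block_decomposition_family:
  assumes acc: "ascending_chain_condition cleq \<M>"
  shows "block_decomposition_family cleq \<M> (cbot A B) (ctop A B) \<Lambda> (\<lambda>l. Kset iL iR A B R \<sigma> (AL l))"
proof (rule block_decomposition_family_cong)
  show "block_decomposition_family cleq \<M> (cbot A B) (ctop A B) \<Lambda>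
      (\<lambda>l. inner_block l \<union> {cbot A B, ctop A B})"
  proof (rule block_decomposition_family_of_partition)
    show "x \<in> inner_block l"
      if "l \<in> \<Lambda>" "c \<in> inner_block l" "x \<in> \<M>" "cleq c x" "x \<noteq> ctop A B" for l c x
      using inner_block_up_closed that(2-5) .
  qed (rule cbot_least | fact cleq_antisym cbot_in_concepts ctop_in_concepts ctop_greatest
      inner_blocks_cover inner_blocks_disjoint inner_block_nonempty exists_other_index
      index_set_nonempty)+
  show "inner_block l \<union> {cbot A B, ctop A B} = Kset iL iR A B R \<sigma> (AL l)" if "l \<in> \<Lambda>" for l
    using Kset_eq_inner_block[OF acc that] by simp
qed

end

theorem theorem32:
  fixes n :: nat
    and cj iL iR :: "nat \<Rightarrow> 'l::complete_lattice \<Rightarrow> 'l \<Rightarrow> 'l"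
    and A :: "'a set" and B :: "'b set"
    and R :: "'a \<Rightarrow> 'b \<Rightarrow> 'l" and \<sigma> :: "'a \<Rightarrow> 'b \<Rightarrow> nat"
    and \<Lambda> :: "'i set" and AL :: "'i \<Rightarrow> 'a set" and BL :: "'i \<Rightarrow> 'b set"
  assumes adj: "\<forall>i\<in>{1..n}. adjoint_triple (cj i) (iL i) (iR i)"
    and unit: "\<forall>i\<in>{1..n}. \<forall>x. cj i x top = x \<and> cj i top x = x"
    and nonempty: "A \<noteq> {}" "B \<noteq> {}"
    and sigma_range: "\<forall>a\<in>A. \<forall>b\<in>B. \<sigma> a b \<in> {1..n}"
    and normalized: "normalized_context A B R"
    and acc: "ascending_chain_condition cleq (concepts iL iR A B R \<sigma>)"
    and decomp: "independent_subcontext_decomposition cj A B R \<sigma> \<Lambda> AL BL"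
  shows "has_block_decomposition cleq (concepts iL iR A B R \<sigma>) (cbot A B) (ctop A B)
     \<and> block_decomposition_family cleq (concepts iL iR A B R \<sigma>) (cbot A B) (ctop A B)
          \<Lambda> (\<lambda>l. Kset iL iR A B R \<sigma> (AL l))"
proof -
  interpret decomposed_multi_adjoint_context n cj iL iR A B R \<sigma> \<Lambda> AL BL
    by unfold_locales (fact adj sigma_range unit normalized decomp)+
  have family: "block_decomposition_family cleq \<M> (cbot A B) (ctop A B) \<Lambda> (\<lambda>l. Kset iL iR A B R \<sigma> (AL l))"
    using acc by (rule Kset_block_decomposition_family)
  show ?thesis using has_block_decomposition_if_family[OF family] family by blast
qed

end
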